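(* Let $\mathbb{F}$ be a field of characteristic different from $2$ and $V$ an $n$-dimensional $\mathbb{F}$-vector space. Let $H\leq V$ be a hyperplane defined by $l_H\in V^*$, and let $G_H\leq \mathrm{GL}(V)$ be a finite group of reflections about $H$ (i.e. a finite group fixing $H$ pointwise). Let $K_H$ be the kernel of $\det$ on $G_H$, let $e_H=|G_H:K_H|$, let $s_H\in G_H$ be a diagonalizable reflection of order $e_H$ (with $s_H=1$ if $e_H=1$), and let $b_H$ be the dimension of the span of the root vectors of the transvections in $K_H$. Let $v_1,\dots,v_n$ be a basis of $V$ such that: $v_1,\dots,v_{n-1}$ is a basis of $H$; $v_1,\dots,v_{b_H}$ are $\mathbb{F}$-independent root vectors (with respect to $l_H$) of transvections in $K_H$; and $v_n\notin H$ is an eigenvector of $s_H$ with $l_H(v_n)=1$. (Such a basis always exists.) Let $z_1,\dots,z_n$ be the dual basis of $V^*$. Then: (1) If $\mu$ is a $K_H$-invariant differential form, written $\mu=\sum_I u_I\,dz_I$ with $u_I\in\mathbb{F}[V]$, and $J$ is an index set with $J\cap\{1,\dots,b_H\}\neq\varnothing$ and $n\notin J$, then $l_H$ divides $u_J$. (2) If moreover $\mu$ is $G_H$-invariant, then $u_J$ is divisible by $l_H^{e_H}$.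
   Context: $\mathbb{F}[V]=S(V^* )$; $\Omega^k=\mathbb{F}[V]\otimes\Lambda^k(V^* )$, $\Omega=\bigoplus_k\Omega^k$, with a group $G\le\mathrm{GL}(V)$ acting on $V^*$ by $(gf)(v)=f(g^{-1}v)$ and diagonally on $\Omega$. For an ordered index set $I=\{i_1<\dots<i_m\}\subseteq\{1,\dots,n\}$, $dz_I=dz_{i_1}\wedge\cdots\wedge dz_{i_m}$; every form is uniquely $\sum_I u_I dz_I$. A reflection about $H$ is a finite-order element of $\mathrm{GL}(V)$ with fixed space $H$; it satisfies $s(v)=v+l_H(v)\alpha_s$ for a root vector $\alpha_s\in V$, and it is a transvection if $\alpha_s\in H$, diagonalizable otherwise. *)

theory Defs
  imports "HOL-Library.Poly_Mapping" "Jordan_Normal_Form.DL_Rank"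
begin

type_synonym 'a mpoly = "(nat \<Rightarrow>\<^sub>0 nat) \<Rightarrow>\<^sub>0 'a"

definition Var :: "nat \<Rightarrow> 'a::comm_ring_1 mpoly" where
  "Var i = Poly_Mapping.single (Poly_Mapping.single i 1) 1"

definition Const :: "'a::comm_ring_1 \<Rightarrow> 'a mpoly" where
  "Const c = Poly_Mapping.single 0 c"

definition vars :: "'a::zero mpoly \<Rightarrow> nat set" where
  "vars p = \<Union> (Poly_Mapping.keys ` Poly_Mapping.keys p)"

definition subst :: "(nat \<Rightarrow> 'a::comm_ring_1 mpoly) \<Rightarrow> 'a mpoly \<Rightarrow> 'a mpoly" where
  "subst \<sigma> p = (\<Sum>m\<in>Poly_Mapping.keys p.
       Const (Poly_Mapping.lookup p m) * (\<Prod>i\<in>Poly_Mapping.keys m. \<sigma> i ^ Poly_Mapping.lookup m i))"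

definition lin_poly :: "nat \<Rightarrow> 'a::comm_ring_1 vec \<Rightarrow> 'a mpoly" where
  "lin_poly n c = (\<Sum>i<n. Const (c $ i) * Var i)"

section \<open>Matrices: V is identified with F^n via the basis v_0..v_(n-1)\<close>

definition minv :: "nat \<Rightarrow> 'a::field mat \<Rightarrow> 'a mat" where
  "minv n A = (SOME B. B \<in> carrier_mat n n \<and> A * B = 1\<^sub>m n \<and> B * A = 1\<^sub>m n)"

text \<open>(g f)(v) = f(g^-1 v); in coordinates g z_i = sum_j (g^-1)_(ij) z_j.\<close>
definition act_poly :: "nat \<Rightarrow> 'a::field mat \<Rightarrow> 'a mpoly \<Rightarrow> 'a mpoly" where
  "act_poly n g f = subst (\<lambda>i. if i < n then lin_poly n (row (minv n g) i) else Var i) f"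

section \<open>Differential forms: mu = sum_I u_I dz_I, represented by I \<mapsto> u_I\<close>

type_synonym 'a form = "nat set \<Rightarrow> 'a mpoly"

definition is_form :: "nat \<Rightarrow> 'a::field form \<Rightarrow> bool" where
  "is_form n \<mu> \<longleftrightarrow> (\<forall>I. (\<not> I \<subseteq> {..<n} \<longrightarrow> \<mu> I = 0) \<and> vars (\<mu> I) \<subseteq> {..<n})"

definition minor :: "'a::comm_ring_1 mat \<Rightarrow> nat set \<Rightarrow> nat set \<Rightarrow> 'a" where
  "minor C I J = det (mat (card I) (card J)
      (\<lambda>(k, l). C $$ (sorted_list_of_set I ! k, sorted_list_of_set J ! l)))"

text \<open>Diagonal action: g(u_I dz_I) = g(u_I) * (g dz_i1) ^ ... ^ (g dz_im), and
  g dz_i = sum_j (g^-1)_(ij) dz_j, so the coefficient of dz_J is a minor.\<close>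
definition act_form :: "nat \<Rightarrow> 'a::field mat \<Rightarrow> 'a form \<Rightarrow> 'a form" where
  "act_form n g \<mu> J = (if J \<subseteq> {..<n} then
      (\<Sum>I\<in>{I \<in> Pow {..<n}. card I = card J}. Const (minor (minv n g) I J) * act_poly n g (\<mu> I))
    else 0)"

definition invariant_form :: "nat \<Rightarrow> 'a::field mat set \<Rightarrow> 'a form \<Rightarrow> bool" where
  "invariant_form n S \<mu> \<longleftrightarrow> (\<forall>g\<in>S. act_form n g \<mu> = \<mu>)"

definition mat_group :: "nat \<Rightarrow> 'a::field mat set \<Rightarrow> bool" where
  "mat_group n G \<longleftrightarrow> G \<subseteq> carrier_mat n n \<and> 1\<^sub>m n \<in> G \<and> (\<forall>g\<in>G. \<forall>h\<in>G. g * h \<in> G)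
     \<and> (\<forall>g\<in>G. \<exists>h\<in>G. g * h = 1\<^sub>m n \<and> h * g = 1\<^sub>m n)"

definition is_root_vector :: "nat \<Rightarrow> 'a::field vec \<Rightarrow> 'a mat \<Rightarrow> 'a vec \<Rightarrow> bool" where
  "is_root_vector n c s \<alpha> \<longleftrightarrow> \<alpha> \<in> carrier_vec n \<and>
     (\<forall>v\<in>carrier_vec n. s *\<^sub>v v = v + (c \<bullet> v) \<cdot>\<^sub>v \<alpha>)"

definition is_transvection :: "nat \<Rightarrow> 'a::field vec \<Rightarrow> 'a mat \<Rightarrow> bool" where
  "is_transvection n c s \<longleftrightarrow> s \<in> carrier_mat n n \<and> s \<noteq> 1\<^sub>m n \<and>
     (\<exists>\<alpha>. is_root_vector n c s \<alpha> \<and> c \<bullet> \<alpha> = 0)"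

definition is_diag_reflection :: "nat \<Rightarrow> 'a::field vec \<Rightarrow> 'a mat \<Rightarrow> bool" where
  "is_diag_reflection n c s \<longleftrightarrow> s \<in> carrier_mat n n \<and> s \<noteq> 1\<^sub>m n \<and>
     (\<exists>\<alpha>. is_root_vector n c s \<alpha> \<and> c \<bullet> \<alpha> \<noteq> 0)"

definition transvection_roots :: "nat \<Rightarrow> 'a::field vec \<Rightarrow> 'a mat set \<Rightarrow> 'a vec set" where
  "transvection_roots n c K =
     {\<alpha>. \<exists>t\<in>K. is_transvection n c t \<and> is_root_vector n c t \<alpha>}"

definition span_dim :: "nat \<Rightarrow> 'a::field vec set \<Rightarrow> nat" where
  "span_dim n S = vectorspace.dim class_ring
     ((module_vec TYPE('a) n)\<lparr>carrier := LinearCombinations.module.span class_ring (module_vec TYPE('a) n) S\<rparr>)"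

end

theory Submission
  imports Defs
begin

text \<open>Every g fixing H pointwise has inverse equal to the identity except in the last
  column, so g acts trivially on F[V] modulo l_H = z_n (Var (n - 1) in the 0-based indexing).
  (1) Let t \<in> K_H be a transvection with root vector v_i, i \<in> J. Comparing coefficients of
  dz_J' with J' = J - {i} \<union> {n} in t\<mu> = \<mu> gives u_J' = t u_J' + d t u_J with a minor d \<noteq> 0;
  modulo z_n this says z_n divides u_J.
  (2) s_H = diag(1, ..., 1, \<lambda>) with \<lambda> of order e_H. Since n \<notin> J, the J-coefficient of
  s_H \<mu> = \<mu> says that u_J is invariant under z_n \<mapsto> z_n / \<lambda>, so the z_n-degree of every
  monomial of u_J is a multiple of e_H, and positive by (1).\<close>

section \<open>Polynomials in the coordinates\<close>

lemma Const_0 [simp]: "Const 0 = (0::'a::comm_ring_1 mpoly)"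
  by (simp add: Const_def)

lemma Const_1 [simp]: "Const 1 = (1::'a::comm_ring_1 mpoly)"
  by (simp add: Const_def)

lemma Const_mult: "Const a * Const b = (Const (a * b) :: 'a::comm_ring_1 mpoly)"
  by (simp add: Const_def mult_single)

lemma Const_mult_single: "Const a * Poly_Mapping.single m b = Poly_Mapping.single m (a * b)"
  by (simp add: Const_def mult_single)

lemma Const_pow: "Const a ^ j = (Const (a ^ j) :: 'a::comm_ring_1 mpoly)"
  by (induction j) (simp_all add: Const_def mult_single mult.commute)

lemma Var_pow:
  "Var k ^ j = (Poly_Mapping.single (Poly_Mapping.single k j) 1 :: 'a::comm_ring_1 mpoly)"
  by (induction j) (simp_all add: Var_def mult_single single_add[symmetric])

lemma Const_mult_Var_pow:
  "(Const a * Var k) ^ j =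
     (Poly_Mapping.single (Poly_Mapping.single k j) (a ^ j) :: 'a::comm_ring_1 mpoly)"
  by (simp add: power_mult_distrib Const_pow Var_pow Const_mult_single)

lemma prod_single:
  "finite S \<Longrightarrow> (\<Prod>k\<in>S. Poly_Mapping.single (h k) (c k)) =
     (Poly_Mapping.single (\<Sum>k\<in>S. h k) (\<Prod>k\<in>S. c k) :: 'b::comm_monoid_add \<Rightarrow>\<^sub>0 'a::comm_ring_1)"
  by (induction S rule: finite_induct) (simp_all add: mult_single)

lemma sum_single_lookup:
  "(\<Sum>k\<in>Poly_Mapping.keys m. Poly_Mapping.single k (Poly_Mapping.lookup m k)) =
     (m :: 'b \<Rightarrow>\<^sub>0 'c::comm_monoid_add)"
  by (rule poly_mapping_eqI) (simp add: lookup_sum lookup_single when_def sum.delta in_keys_iff)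

lemma lookup_subst_scale:
  "Poly_Mapping.lookup (subst (\<lambda>k. Const (a k) * Var k) f) m =
     Poly_Mapping.lookup f m * (\<Prod>k\<in>Poly_Mapping.keys m. a k ^ Poly_Mapping.lookup m k)"
proof -
  have "subst (\<lambda>k. Const (a k) * Var k) f =
    (\<Sum>m\<in>Poly_Mapping.keys f. Poly_Mapping.single m
       (Poly_Mapping.lookup f m * (\<Prod>k\<in>Poly_Mapping.keys m. a k ^ Poly_Mapping.lookup m k)))"
    unfolding subst_def
    by (rule sum.cong[OF refl])
      (simp add: Const_mult_Var_pow prod_single sum_single_lookup Const_mult_single)
  then show ?thesis
    by (auto simp add: lookup_sum lookup_single when_def sum.delta in_keys_iff)
qed

lemma subst_Var: "subst Var f = (f :: 'a::comm_ring_1 mpoly)"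
proof -
  have "(\<lambda>k. Const 1 * Var k) = (Var :: nat \<Rightarrow> 'a mpoly)"
    by simp
  then show ?thesis
    using lookup_subst_scale[of "\<lambda>_. 1" f] by (intro poly_mapping_eqI) simp
qed

lemma dvd_prod_diff:
  "(\<And>x. x \<in> S \<Longrightarrow> d dvd f x - g x) \<Longrightarrow> (d::'a::comm_ring_1) dvd prod f S - prod g S"
proof (induction S rule: infinite_finite_induct)
  case (insert a S)
  have "prod f (insert a S) - prod g (insert a S) =
      f a * (prod f S - prod g S) + (f a - g a) * prod g S"
    using insert by (simp add: algebra_simps)
  then show ?case using insert by simp
qed auto

lemma dvd_power_diff: "(d::'a::comm_ring_1) dvd a - b \<Longrightarrow> d dvd a ^ j - b ^ j"
  using dvd_prod_diff[of "{..<j}" d "\<lambda>_. a" "\<lambda>_. b"] by simp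

lemma dvd_subst_diff: "(\<And>k. d dvd \<sigma> k - \<tau> k) \<Longrightarrow> d dvd subst \<sigma> f - subst \<tau> f"
  unfolding subst_def sum_subtractf[symmetric] right_diff_distrib[symmetric]
  by (intro dvd_sum dvd_mult dvd_prod_diff dvd_power_diff) auto

lemma lookup_pos_if_Var_dvd:
  assumes "Var j dvd f" "m \<in> Poly_Mapping.keys f"
  shows "0 < Poly_Mapping.lookup m j"
proof -
  obtain q where "f = Var j * q" using assms(1) by (auto elim: dvdE)
  then obtain m' where "m = Poly_Mapping.single j 1 + m'"
    using assms(2) keys_mult[of "Var j" q] by (auto simp: Var_def)
  then show ?thesis by (simp add: lookup_add)
qed

lemma Var_pow_dvd_if_lookup_ge:
  assumes "\<forall>m\<in>Poly_Mapping.keys f. e \<le> Poly_Mapping.lookup m j"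
  shows "Var j ^ e dvd (f::'a::comm_ring_1 mpoly)"
proof -
  let ?q = "\<Sum>m\<in>Poly_Mapping.keys f.
    Poly_Mapping.single (m - Poly_Mapping.single j e) (Poly_Mapping.lookup f m)"
  have "Var j ^ e * ?q =
      (\<Sum>m\<in>Poly_Mapping.keys f. Poly_Mapping.single m (Poly_Mapping.lookup f m))"
    unfolding sum_distrib_left Var_pow
  proof (rule sum.cong[OF refl])
    fix m assume "m \<in> Poly_Mapping.keys f"
    then have "Poly_Mapping.single j e + (m - Poly_Mapping.single j e) = m"
      using assms
      by (intro poly_mapping_eqI) (auto simp: lookup_add lookup_minus lookup_single when_def)
    then show "Poly_Mapping.single (Poly_Mapping.single j e) 1 *
        Poly_Mapping.single (m - Poly_Mapping.single j e) (Poly_Mapping.lookup f m) =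
      Poly_Mapping.single m (Poly_Mapping.lookup f m)"
      by (simp add: mult_single)
  qed
  also have "\<dots> = f" by (rule sum_single_lookup)
  finally show ?thesis by (metis dvdI)
qed

text \<open>If rescaling z_j by a root of unity x of order e fixes f, every monomial of f has
  z_j-degree divisible by e; if moreover z_j divides f, these degrees are positive.\<close>
lemma Var_pow_dvd_if_scale_invariant:
  fixes f :: "'a::field mpoly"
  assumes fixed: "subst (\<lambda>k. Const (if k = j then x else 1) * Var k) f = f"
    and dvd: "Var j dvd f"
    and order: "x ^ e = 1" "\<forall>k. 0 < k \<and> k < e \<longrightarrow> x ^ k \<noteq> 1"
  shows "Var j ^ e dvd f"
proof (rule Var_pow_dvd_if_lookup_ge, intro ballI)
  fix m assume m: "m \<in> Poly_Mapping.keys f"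
  define d where "d = Poly_Mapping.lookup m j"
  have "(\<Prod>k\<in>Poly_Mapping.keys m. (if k = j then x else 1) ^ Poly_Mapping.lookup m k) = x ^ d"
    unfolding d_def
    by (subst prod.cong[OF refl, where h = "\<lambda>k. if k = j then x ^ Poly_Mapping.lookup m k else 1"])
      (auto simp: prod.delta' in_keys_iff)
  then have "Poly_Mapping.lookup f m * x ^ d = Poly_Mapping.lookup f m"
    using arg_cong[OF fixed, of "\<lambda>p. Poly_Mapping.lookup p m"] by (simp add: lookup_subst_scale)
  moreover have "Poly_Mapping.lookup f m \<noteq> 0" using m by (simp add: in_keys_iff)
  ultimately have "x ^ d = 1" by simp
  then have "x ^ (d mod e) = 1"
    using order(1) by (metis mult.commute mult_1 div_mult_mod_eq power_add power_mult power_one)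
  then have "e = 0 \<or> e dvd d"
    using order(2) by (auto simp: dvd_eq_mod_eq_0)
  moreover have "0 < d" using lookup_pos_if_Var_dvd[OF dvd m] by (simp add: d_def)
  ultimately show "e \<le> Poly_Mapping.lookup m j" by (auto simp: d_def dvd_imp_le)
qed

lemma lin_poly_unit_vec:
  assumes "j < n"
  shows "lin_poly n (unit_vec n j) = Var j"
proof -
  have "(\<Sum>i<n. Const (unit_vec n j $ i) * Var i) = (\<Sum>i<n. if i = j then Var i else 0)"
    using assms by (intro sum.cong) auto
  then show ?thesis using assms by (simp add: lin_poly_def)
qed

section \<open>Minors\<close>

lemma sum_set_nth: "distinct xs \<Longrightarrow> sum g (set xs) = (\<Sum>r\<in>{0..<length xs}. g (xs ! r))"
  by (simp add: sum.distinct_set_conv_list sum_list_sum_nth)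

definition minor_mat :: "'a::comm_ring_1 mat \<Rightarrow> nat set \<Rightarrow> nat set \<Rightarrow> 'a mat" where
  "minor_mat C I J = mat (card I) (card J)
      (\<lambda>(k, l). C $$ (sorted_list_of_set I ! k, sorted_list_of_set J ! l))"

lemma minor_eq_0_if_zero_col:
  fixes C :: "'a::field mat"
  assumes fin: "finite I" "finite J" and card: "card I = card J" and y: "y \<in> J"
    and zero: "\<forall>x\<in>I. C $$ (x, y) = 0"
  shows "minor C I J = 0"
proof -
  let ?k = "card J"
  let ?A = "minor_mat C I J"
  have A: "?A \<in> carrier_mat ?k ?k" using card by (simp add: minor_mat_def)
  have "y \<in> set (sorted_list_of_set J)" using y fin by simp
  then obtain l where l: "l < ?k" "sorted_list_of_set J ! l = y"
    by (auto simp: in_set_conv_nth)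
  have "?A *\<^sub>v unit_vec ?k l = 0\<^sub>v ?k"
  proof (rule eq_vecI)
    fix r assume "r < dim_vec (0\<^sub>v ?k :: 'a vec)"
    then have r: "r < card I" using card by simp
    then have "sorted_list_of_set I ! r \<in> I" using fin
      by (metis length_sorted_list_of_set nth_mem set_sorted_list_of_set)
    then show "(?A *\<^sub>v unit_vec ?k l) $ r = 0\<^sub>v ?k $ r"
      using r l zero A card by (simp add: minor_mat_def)
  qed (use A in simp)
  then have "det ?A = 0"
    using det_0_iff_vec_prod_zero_field[OF A] l by (metis unit_vec_carrier unit_vec_nonzero)
  then show ?thesis by (simp add: minor_def minor_mat_def)
qed

lemma minor_eq_delta:
  fixes C :: "'a::field mat"
  assumes fin: "finite I" "finite J" and card: "card I = card J"
    and delta: "\<forall>x\<in>I. \<forall>y\<in>J. C $$ (x, y) = (if x = y then 1 else 0)"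
  shows "minor C I J = (if I = J then 1 else 0)"
proof (cases "I = J")
  case True
  have "minor_mat C I J = 1\<^sub>m (card J)"
  proof (rule eq_matI)
    fix r l assume "r < dim_row (1\<^sub>m (card J) :: 'a mat)" "l < dim_col (1\<^sub>m (card J) :: 'a mat)"
    then have r: "r < length (sorted_list_of_set J)" "l < length (sorted_list_of_set J)" by auto
    then have "sorted_list_of_set J ! r \<in> J" "sorted_list_of_set J ! l \<in> J"
      using fin by (metis nth_mem set_sorted_list_of_set)+
    moreover have "(sorted_list_of_set J ! r = sorted_list_of_set J ! l) = (r = l)"
      using r by (simp add: nth_eq_iff_index_eq)
    ultimately show "minor_mat C I J $$ (r, l) = 1\<^sub>m (card J) $$ (r, l)"
      using r delta True by (simp add: minor_mat_def)
  qed (use True in \<open>auto simp: minor_mat_def\<close>)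
  then show ?thesis using True by (simp add: minor_def minor_mat_def[symmetric])
next
  case False
  then obtain y where y: "y \<in> J" "y \<notin> I"
    using card fin card_subset_eq by (metis subsetI)
  have "minor C I J = 0"
    by (rule minor_eq_0_if_zero_col[OF fin card y(1)]) (use delta y in auto)
  then show ?thesis using False by simp
qed

text \<open>An orthonormal family of columns makes the minor a square root of
  det (A^T A) = 1, avoiding any sign bookkeeping.\<close>
lemma minor_nonzero_if_orthonormal_cols:
  fixes C :: "'a::field mat"
  assumes fin: "finite I" "finite J" and card: "card I = card J"
    and orth: "\<forall>y\<in>J. \<forall>y'\<in>J. (\<Sum>x\<in>I. C $$ (x, y) * C $$ (x, y')) = (if y = y' then 1 else 0)"
  shows "minor C I J \<noteq> 0"
proof -
  let ?k = "card J"
  let ?A = "minor_mat C I J"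
  let ?col = "\<lambda>l. sorted_list_of_set J ! l"
  have A: "?A \<in> carrier_mat ?k ?k" using card by (simp add: minor_mat_def)
  have "transpose_mat ?A * ?A = 1\<^sub>m ?k"
  proof (rule eq_matI)
    fix l l' assume "l < dim_row (1\<^sub>m ?k :: 'a mat)" "l' < dim_col (1\<^sub>m ?k :: 'a mat)"
    then have l: "l < length (sorted_list_of_set J)" "l' < length (sorted_list_of_set J)" by auto
    then have "?col l \<in> J" "?col l' \<in> J"
      using fin by (metis nth_mem set_sorted_list_of_set)+
    moreover have "(?col l = ?col l') = (l = l')"
      using l by (simp add: nth_eq_iff_index_eq)
    moreover have "(transpose_mat ?A * ?A) $$ (l, l') =
        (\<Sum>r\<in>{0..<card I}. C $$ (sorted_list_of_set I ! r, ?col l) *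
          C $$ (sorted_list_of_set I ! r, ?col l'))"
      using l A card by (simp add: minor_mat_def scalar_prod_def)
    moreover have "\<dots> = (\<Sum>x\<in>I. C $$ (x, ?col l) * C $$ (x, ?col l'))"
      using sum_set_nth[of "sorted_list_of_set I" "\<lambda>x. C $$ (x, ?col l) * C $$ (x, ?col l')"]
        fin by simp
    ultimately show "(transpose_mat ?A * ?A) $$ (l, l') = 1\<^sub>m ?k $$ (l, l')"
      using orth l by simp
  qed (use A in auto)
  then have "det (transpose_mat ?A) * det ?A = 1"
    using det_mult[of "transpose_mat ?A" ?k ?A] A by simp
  then show ?thesis by (auto simp: minor_def minor_mat_def)
qed

section \<open>Matrices fixing the coordinate hyperplane\<close>

definition fixes_coord_hyperplane :: "nat \<Rightarrow> 'a::semiring_1 mat \<Rightarrow> bool" where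
  "fixes_coord_hyperplane n g \<longleftrightarrow> (\<forall>b < n - 1. g *\<^sub>v unit_vec n b = unit_vec n b)"

lemma mat_index_eq_mult_unit_vec:
  fixes A :: "'a::semiring_1 mat"
  shows "A \<in> carrier_mat n n \<Longrightarrow> a < n \<Longrightarrow> b < n \<Longrightarrow> A $$ (a, b) = (A *\<^sub>v unit_vec n b) $ a"
  using scalar_prod_right_unit[of b n "row A a"] by simp

lemma fixes_coord_hyperplane_index:
  "A \<in> carrier_mat n n \<Longrightarrow> fixes_coord_hyperplane n A \<Longrightarrow> a < n \<Longrightarrow> b < n - 1 \<Longrightarrow>
    A $$ (a, b) = (if a = b then 1 else 0)"
  by (simp add: fixes_coord_hyperplane_def mat_index_eq_mult_unit_vec)

lemma fixes_coord_hyperplane_left_inverse: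
  assumes M: "M \<in> carrier_mat n n" and g: "g \<in> carrier_mat n n" "fixes_coord_hyperplane n g"
    and inv: "M * g = 1\<^sub>m n"
  shows "fixes_coord_hyperplane n M"
  unfolding fixes_coord_hyperplane_def
proof (intro allI impI)
  fix b assume "b < n - 1"
  then have "M *\<^sub>v unit_vec n b = M *\<^sub>v (g *\<^sub>v unit_vec n b)"
    using g(2) by (simp add: fixes_coord_hyperplane_def)
  also have "\<dots> = unit_vec n b"
    using M g(1) inv by (simp flip: assoc_mult_mat_vec)
  finally show "M *\<^sub>v unit_vec n b = unit_vec n b" .
qed

lemma minv_left_inverse:
  assumes "mat_group n G" "g \<in> G"
  shows "minv n g \<in> carrier_mat n n" "minv n g * g = 1\<^sub>m n"
proof -
  have "\<exists>B. B \<in> carrier_mat n n \<and> g * B = 1\<^sub>m n \<and> B * g = 1\<^sub>m n"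
    using assms unfolding mat_group_def by blast
  then have "minv n g \<in> carrier_mat n n \<and> g * minv n g = 1\<^sub>m n \<and> minv n g * g = 1\<^sub>m n"
    unfolding minv_def by (rule someI_ex)
  then show "minv n g \<in> carrier_mat n n" "minv n g * g = 1\<^sub>m n" by auto
qed

lemma mat_pow_mult_vec_eigen:
  fixes A :: "'a::field mat"
  assumes "A \<in> carrier_mat n n" "v \<in> carrier_vec n" "A *\<^sub>v v = x \<cdot>\<^sub>v v"
  shows "A ^\<^sub>m k *\<^sub>v v = x ^ k \<cdot>\<^sub>v v"
proof (induction k)
  case (Suc k)
  have "A ^\<^sub>m Suc k *\<^sub>v v = A ^\<^sub>m k *\<^sub>v (x \<cdot>\<^sub>v v)"
    using assms assoc_mult_mat_vec[of "A ^\<^sub>m k" n n A n v] by simp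
  also have "\<dots> = x ^ Suc k \<cdot>\<^sub>v v"
    using assms Suc by (simp add: mult_mat_vec[of _ n n] smult_smult_assoc mult.commute)
  finally show ?case .
qed (use assms in auto)

lemma eq_one_mat_if_fixes_unit_vecs:
  fixes A :: "'a::semiring_1 mat"
  assumes "A \<in> carrier_mat n n" "\<And>b. b < n \<Longrightarrow> A *\<^sub>v unit_vec n b = unit_vec n b"
  shows "A = 1\<^sub>m n"
  by (rule eq_matI) (use assms mat_index_eq_mult_unit_vec[OF assms(1)] in auto)

lemma dilation_pow_eq_one_iff:
  fixes s :: "'a::field mat"
  assumes s: "s \<in> carrier_mat n n" "fixes_coord_hyperplane n s"
      "s *\<^sub>v unit_vec n (n - 1) = x \<cdot>\<^sub>v unit_vec n (n - 1)"
    and n: "0 < n"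
  shows "s ^\<^sub>m k = 1\<^sub>m n \<longleftrightarrow> x ^ k = 1"
proof
  have "s ^\<^sub>m k *\<^sub>v unit_vec n (n - 1) = x ^ k \<cdot>\<^sub>v unit_vec n (n - 1)"
    using mat_pow_mult_vec_eigen[OF s(1) _ s(3)] by simp
  moreover assume "s ^\<^sub>m k = 1\<^sub>m n"
  ultimately have "(x ^ k \<cdot>\<^sub>v unit_vec n (n - 1)) $ (n - 1) = 1"
    using n by simp
  then show "x ^ k = 1" using n by simp
next
  assume xk: "x ^ k = 1"
  show "s ^\<^sub>m k = 1\<^sub>m n"
  proof (rule eq_one_mat_if_fixes_unit_vecs)
    fix b assume b: "b < n"
    have "s *\<^sub>v unit_vec n b = (if b = n - 1 then x else 1) \<cdot>\<^sub>v unit_vec n b"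
      using s(2,3) b by (auto simp: fixes_coord_hyperplane_def)
    from mat_pow_mult_vec_eigen[OF s(1) _ this]
    show "s ^\<^sub>m k *\<^sub>v unit_vec n b = unit_vec n b" using xk by simp
  qed (use s in simp)
qed

lemma lin_poly_row_fixing_hyperplane:
  assumes M: "M \<in> carrier_mat n n" "fixes_coord_hyperplane n M" and k: "k < n"
  shows "lin_poly n (row M k) =
    (if k < n - 1 then Var k else 0) + Const (M $$ (k, n - 1)) * Var (n - 1)"
proof -
  have U: "{..<n} = insert (n - 1) {..<n - 1}" using k by auto
  have "(\<Sum>b<n - 1. Const (row M k $ b) * Var b) = (\<Sum>b<n - 1. if b = k then Var k else 0)"
    by (rule sum.cong) (use M k fixes_coord_hyperplane_index[OF M] in auto)
  also have "\<dots> = (if k < n - 1 then Var k else 0)"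
    by (simp add: sum.delta')
  finally show ?thesis
    unfolding lin_poly_def U using M k by (simp add: add.commute)
qed

lemma act_poly_congruent:
  assumes "minv n g \<in> carrier_mat n n" "fixes_coord_hyperplane n (minv n g)"
  shows "Var (n - 1) dvd act_poly n g f - f"
proof -
  have "Var (n - 1) dvd act_poly n g f - subst Var f"
    unfolding act_poly_def
  proof (rule dvd_subst_diff)
    fix k
    show "Var (n - 1) dvd (if k < n then lin_poly n (row (minv n g) k) else Var k) - Var k"
    proof (cases "k < n")
      case True
      then have "k < n - 1 \<or> k = n - 1" by auto
      then show ?thesis
        using lin_poly_row_fixing_hyperplane[OF assms True] True
        by (auto simp: dvd_diff)
    qed simp
  qed
  then show ?thesis by (simp add: subst_Var)
qed

lemma act_poly_eq_subst_scale:
  assumes M: "minv n g \<in> carrier_mat n n" "fixes_coord_hyperplane n (minv n g)"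
    and last: "minv n g *\<^sub>v unit_vec n (n - 1) = x \<cdot>\<^sub>v unit_vec n (n - 1)"
    and n: "0 < n"
  shows "act_poly n g f = subst (\<lambda>k. Const (if k = n - 1 then x else 1) * Var k) f"
  unfolding act_poly_def
proof (rule arg_cong[where f = "\<lambda>\<sigma>. subst \<sigma> f"], rule ext)
  fix k
  show "(if k < n then lin_poly n (row (minv n g) k) else Var k) =
      Const (if k = n - 1 then x else 1) * Var k"
  proof (cases "k < n")
    case True
    then have "minv n g $$ (k, n - 1) = (if k = n - 1 then x else 0)"
      using M(1) last by (simp add: mat_index_eq_mult_unit_vec)
    then show ?thesis
      using lin_poly_row_fixing_hyperplane[OF M True] True by auto
  qed (use n in simp)
qed

lemma act_form_eq_act_poly:
  assumes M: "minv n g \<in> carrier_mat n n" "fixes_coord_hyperplane n (minv n g)"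
    and J: "J \<subseteq> {..<n}" "n - 1 \<notin> J"
  shows "act_form n g \<mu> J = act_poly n g (\<mu> J)"
proof -
  let ?Q = "{I \<in> Pow {..<n}. card I = card J}"
  have finJ: "finite J" using J(1) finite_subset by blast
  have entries: "minv n g $$ (x, y) = (if x = y then 1 else 0)" if "x < n" "y \<in> J" for x y
  proof -
    have "y < n" "y \<noteq> n - 1" using that(2) J by auto
    then show ?thesis using fixes_coord_hyperplane_index[OF M that(1)] by simp
  qed
  have minors: "minor (minv n g) I J = (if I = J then 1 else 0)" if "I \<in> ?Q" for I
    using that entries finite_subset[of I "{..<n}"]
    by (intro minor_eq_delta[OF _ finJ]) auto
  have "act_form n g \<mu> J = (\<Sum>I\<in>?Q. Const (minor (minv n g) I J) * act_poly n g (\<mu> I))"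
    using J(1) by (simp add: act_form_def)
  also have "\<dots> = (\<Sum>I\<in>?Q. if I = J then act_poly n g (\<mu> I) else 0)"
    by (rule sum.cong) (simp_all add: minors)
  also have "\<dots> = act_poly n g (\<mu> J)"
    using J(1) by (simp add: sum.delta')
  finally show ?thesis .
qed

section \<open>Transvections and the diagonalizable reflection\<close>

lemma left_inverse_transvection_last_col:
  fixes t :: "'a::field mat"
  assumes M: "M \<in> carrier_mat n n" "M * t = 1\<^sub>m n"
    and t: "t \<in> carrier_mat n n" "fixes_coord_hyperplane n t"
      "t *\<^sub>v unit_vec n (n - 1) = unit_vec n (n - 1) + unit_vec n i"
    and i: "i < n - 1" and a: "a < n"
  shows "M $$ (a, n - 1) = (if a = n - 1 then 1 else 0) - (if a = i then 1 else 0)"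
proof -
  have M_hyp: "fixes_coord_hyperplane n M"
    using fixes_coord_hyperplane_left_inverse[OF M(1) t(1,2) M(2)] .
  have "M *\<^sub>v unit_vec n (n - 1) + unit_vec n i = M *\<^sub>v (t *\<^sub>v unit_vec n (n - 1))"
    using M(1) M_hyp i t(3) by (simp add: mult_add_distrib_mat_vec fixes_coord_hyperplane_def)
  also have "\<dots> = unit_vec n (n - 1)"
    using M t(1) by (simp flip: assoc_mult_mat_vec)
  finally have M_last: "M *\<^sub>v unit_vec n (n - 1) + unit_vec n i = unit_vec n (n - 1)" .
  have "M $$ (a, n - 1) = (M *\<^sub>v unit_vec n (n - 1)) $ a"
    using mat_index_eq_mult_unit_vec[OF M(1) a, of "n - 1"] a by simp
  then show ?thesis
    using arg_cong[OF M_last, of "\<lambda>v. v $ a"] a i M(1) by (simp add: eq_diff_eq)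
qed

text \<open>The assumptions describe the inverse of a transvection v_(n-1) \<mapsto> v_(n-1) + v_i
  fixing H, as computed above.\<close>
context
  fixes M :: "'a::field mat" and n i :: nat and J :: "nat set"
  assumes M_hyperplane: "\<And>a b. a < n \<Longrightarrow> b < n - 1 \<Longrightarrow> M $$ (a, b) = (if a = b then 1 else 0)"
    and M_last: "\<And>a. a < n \<Longrightarrow>
      M $$ (a, n - 1) = (if a = n - 1 then 1 else 0) - (if a = i then 1 else 0)"
    and J: "J \<subseteq> {..<n}" "i \<in> J" "n - 1 \<notin> J"
begin

lemma transvection_swap_card: "card (insert (n - 1) (J - {i})) = card J"
proof -
  have "finite J" using J(1) finite_subset by blast
  then have "card (insert (n - 1) (J - {i})) = Suc (card (J - {i}))"
    using J(3) by (intro card_insert_disjoint) auto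
  also have "\<dots> = card J"
    using \<open>finite J\<close> J(2) by (rule card_Suc_Diff1)
  finally show ?thesis .
qed

lemma minor_transvection_swap_self:
  "minor M (insert (n - 1) (J - {i})) (insert (n - 1) (J - {i})) = 1"
proof -
  have "M $$ (x, y) = (if x = y then 1 else 0)"
    if "x \<in> insert (n - 1) (J - {i})" "y \<in> insert (n - 1) (J - {i})" for x y
  proof -
    have "x < n" "x \<noteq> i" "y < n" using J that by auto
    then show ?thesis using M_hyperplane M_last by (cases "y = n - 1") auto
  qed
  then show ?thesis
    using minor_eq_delta[of "insert (n - 1) (J - {i})" _ M] finite_subset[OF J(1)] by auto
qed

lemma minor_transvection_swap_nonzero:
  "minor M J (insert (n - 1) (J - {i})) \<noteq> 0"
proof -
  let ?J' = "insert (n - 1) (J - {i})"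
  have finJ: "finite J" using J(1) finite_subset by blast
  have entries: "M $$ (x, y) =
      (if y = n - 1 then (if x = i then -1 else 0) else (if x = y then 1 else 0))"
    if "x \<in> J" "y \<in> ?J'" for x y
  proof -
    have "x < n" "x \<noteq> n - 1" "y < n" using J that by auto
    then show ?thesis using M_hyperplane M_last by (cases "y = n - 1") auto
  qed
  have "(\<Sum>x\<in>J. M $$ (x, y) * M $$ (x, y')) = (if y = y' then 1 else 0)"
    if "y \<in> ?J'" "y' \<in> ?J'" for y y'
  proof -
    have "(\<Sum>x\<in>J. M $$ (x, y) * M $$ (x, y')) =
        (\<Sum>x\<in>J. if x = (if y = n - 1 then i else y) \<and> y = y' then 1 else 0)"
      using that J entries by (intro sum.cong) auto
    then show ?thesis
      using that J finJ by (simp add: sum.delta' split: if_splits)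
  qed
  then show ?thesis
    by (intro minor_nonzero_if_orthonormal_cols[OF finJ _ transvection_swap_card[symmetric]])
      (use finJ in auto)
qed

lemma minor_transvection_swap_other:
  assumes I: "I \<subseteq> {..<n}" "card I = card J" "I \<noteq> J" "I \<noteq> insert (n - 1) (J - {i})"
  shows "minor M I (insert (n - 1) (J - {i})) = 0"
proof -
  let ?J' = "insert (n - 1) (J - {i})"
  have finI: "finite I" using I(1) finite_subset by blast
  have finJ': "finite ?J'" using J(1) finite_subset by blast
  have cI: "card I = card ?J'" using I(2) transvection_swap_card by simp
  show ?thesis
  proof (cases "J - {i} \<subseteq> I")
    case False
    then obtain y where y: "y \<in> J" "y \<noteq> i" "y \<notin> I" by auto
    have "y < n" "y \<noteq> n - 1" using y J by auto
    then have "y < n - 1" by linarith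
    then have "\<forall>x\<in>I. M $$ (x, y) = 0" using y(3) I(1) M_hyperplane by auto
    then show ?thesis using y by (intro minor_eq_0_if_zero_col[OF finI finJ' cI, of y]) auto
  next
    case True
    have "n - 1 \<notin> I"
      using True I card_subset_eq[OF finI] cI by (metis insert_subset)
    moreover have "i \<notin> I"
      using True I card_subset_eq[OF finI] J(2) by (metis insert_Diff insert_subset)
    ultimately have "\<forall>x\<in>I. M $$ (x, n - 1) = 0" using I(1) M_last by auto
    then show ?thesis by (intro minor_eq_0_if_zero_col[OF finI finJ' cI, of "n - 1"]) auto
  qed
qed

end

text \<open>A transvection t with root vector v_i, i \<in> J, mixes the coefficients of dz_J and
  dz_J' with J' = J - {i} \<union> {n - 1}; reducing the J'-coefficient of t\<mu> = \<mu> modulo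
  z_(n-1) leaves a nonzero multiple of u_J.\<close>
lemma transvection_invariant_coeff_dvd:
  fixes t :: "'a::field mat"
  assumes M: "minv n t \<in> carrier_mat n n" "minv n t * t = 1\<^sub>m n"
    and t: "t \<in> carrier_mat n n" "fixes_coord_hyperplane n t"
      "t *\<^sub>v unit_vec n (n - 1) = unit_vec n (n - 1) + unit_vec n i"
    and J: "J \<subseteq> {..<n}" "i \<in> J" "n - 1 \<notin> J"
    and inv: "act_form n t \<mu> = \<mu>"
  shows "Var (n - 1) dvd \<mu> J"
proof -
  define J' where "J' = insert (n - 1) (J - {i})"
  let ?M = "minv n t" and ?A = "act_poly n t"
  have "i < n" "i \<noteq> n - 1" using J by auto
  then have i: "i < n - 1" by linarith
  have M_hyp: "fixes_coord_hyperplane n ?M"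
    using fixes_coord_hyperplane_left_inverse[OF M(1) t(1,2) M(2)] .
  note entries_last = left_inverse_transvection_last_col[OF M t i]
  have entries_hyp: "?M $$ (a, b) = (if a = b then 1 else 0)" if "a < n" "b < n - 1" for a b
    using that M(1) M_hyp fixes_coord_hyperplane_index by blast
  note minors = minor_transvection_swap_self[OF entries_hyp entries_last J]
    minor_transvection_swap_nonzero[OF entries_hyp entries_last J]
    minor_transvection_swap_other[OF entries_hyp entries_last J]
  define d where "d = minor ?M J J'"
  have J'_sub: "J' \<subseteq> {..<n}" and J'_ne: "J' \<noteq> J" using J i unfolding J'_def by auto
  have card_J': "card J' = card J"
    unfolding J'_def by (rule transvection_swap_card[OF entries_hyp entries_last J])
  have other: "Const (minor ?M I J') * ?A (\<mu> I) = 0"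
    if "I \<in> {I \<in> Pow {..<n}. card I = card J'} - {J', J}" for I
    using that minors(3)[of I] card_J' by (simp add: J'_def)
  have "\<mu> J' = act_form n t \<mu> J'" using inv by simp
  also have "\<dots> = (\<Sum>I\<in>{I \<in> Pow {..<n}. card I = card J'}. Const (minor ?M I J') * ?A (\<mu> I))"
    using J'_sub by (simp add: act_form_def)
  also have "\<dots> = (\<Sum>I\<in>{J', J}. Const (minor ?M I J') * ?A (\<mu> I))"
    by (rule sum.mono_neutral_right) (use J'_sub J(1) card_J' other in auto)
  also have "\<dots> = ?A (\<mu> J') + Const d * ?A (\<mu> J)"
    using J'_ne minors(1) by (simp add: d_def J'_def)
  finally have "Const d * \<mu> J = (\<mu> J' - ?A (\<mu> J')) - Const d * (?A (\<mu> J) - \<mu> J)"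
    by (simp add: algebra_simps)
  moreover have "Var (n - 1) dvd \<mu> J' - ?A (\<mu> J')" "Var (n - 1) dvd ?A (\<mu> J) - \<mu> J"
    using act_poly_congruent[OF M(1) M_hyp] dvd_minus_iff minus_diff_eq by metis+
  ultimately have "Var (n - 1) dvd Const (1 / d) * (Const d * \<mu> J)" by simp
  then show ?thesis
    using minors(2) by (simp add: d_def J'_def mult.assoc[symmetric] Const_mult)
qed

lemma dilation_invariant_coeff_dvd:
  fixes s :: "'a::field mat"
  assumes M: "minv n s \<in> carrier_mat n n" "minv n s * s = 1\<^sub>m n"
    and s: "s \<in> carrier_mat n n" "fixes_coord_hyperplane n s"
      "s *\<^sub>v unit_vec n (n - 1) = x \<cdot>\<^sub>v unit_vec n (n - 1)"
    and order: "s ^\<^sub>m e = 1\<^sub>m n" "\<forall>k. 0 < k \<and> k < e \<longrightarrow> s ^\<^sub>m k \<noteq> 1\<^sub>m n"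
    and n: "0 < n" and J: "J \<subseteq> {..<n}" "n - 1 \<notin> J"
    and inv: "act_form n s \<mu> = \<mu>" and dvd: "Var (n - 1) dvd \<mu> J"
  shows "Var (n - 1) ^ e dvd \<mu> J"
proof (cases "e = 0")
  case False
  have x_order: "x ^ e = 1" "\<forall>k. 0 < k \<and> k < e \<longrightarrow> x ^ k \<noteq> 1"
    using order dilation_pow_eq_one_iff[OF s n] by auto
  then have "x \<noteq> 0" using False by (metis power_0_left zero_neq_one)
  have M_hyp: "fixes_coord_hyperplane n (minv n s)"
    using fixes_coord_hyperplane_left_inverse[OF M(1) s(1,2) M(2)] .
  have "x \<cdot>\<^sub>v (minv n s *\<^sub>v unit_vec n (n - 1)) = minv n s *\<^sub>v (s *\<^sub>v unit_vec n (n - 1))"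
    using M(1) s(3) by (simp add: mult_mat_vec)
  also have "\<dots> = unit_vec n (n - 1)"
    using M s(1) by (simp flip: assoc_mult_mat_vec)
  finally have "(1 / x) \<cdot>\<^sub>v (x \<cdot>\<^sub>v (minv n s *\<^sub>v unit_vec n (n - 1))) =
      (1 / x) \<cdot>\<^sub>v unit_vec n (n - 1)"
    by simp
  then have M_last: "minv n s *\<^sub>v unit_vec n (n - 1) = (1 / x) \<cdot>\<^sub>v unit_vec n (n - 1)"
    using \<open>x \<noteq> 0\<close> by (simp add: smult_smult_assoc)
  let ?scale = "\<lambda>k. Const (if k = n - 1 then 1 / x else 1) * Var k"
  have "subst ?scale (\<mu> J) = act_poly n s (\<mu> J)"
    using act_poly_eq_subst_scale[OF M(1) M_hyp M_last n] by simp
  also have "\<dots> = act_form n s \<mu> J"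
    using act_form_eq_act_poly[OF M(1) M_hyp J] by simp
  also have "\<dots> = \<mu> J"
    using inv by simp
  finally have "subst ?scale (\<mu> J) = \<mu> J" .
  moreover have "(1 / x) ^ e = 1" "\<forall>k. 0 < k \<and> k < e \<longrightarrow> (1 / x) ^ k \<noteq> 1"
    using x_order by (auto simp: power_one_over)
  ultimately show ?thesis
    using Var_pow_dvd_if_scale_invariant dvd by blast
qed simp

theorem lemma3p3:
  fixes n :: nat and c :: "'a::field vec" and G :: "'a mat set"
    and s :: "'a mat" and b :: nat and \<mu> :: "'a form" and J :: "nat set"
  defines "K \<equiv> {g \<in> G. det g = 1}"
  defines "e \<equiv> card G div card K"
  assumes char: "(2::'a) \<noteq> 0"
    and n: "0 < n"
    and c: "c \<in> carrier_vec n"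
    and basisH: "\<forall>i < n - 1. c $ i = 0"
    and ln: "c $ (n - 1) = 1"
    and grp: "mat_group n G" and fin: "finite G"
    and fixH: "\<forall>g\<in>G. \<forall>v\<in>carrier_vec n. c \<bullet> v = 0 \<longrightarrow> g *\<^sub>v v = v"
    and sG: "s \<in> G"
    and s_ord: "s ^\<^sub>m e = 1\<^sub>m n" "\<forall>k. 0 < k \<and> k < e \<longrightarrow> s ^\<^sub>m k \<noteq> 1\<^sub>m n"
    and s_diag: "e = 1 \<or> is_diag_reflection n c s"
    and eig: "\<exists>lam. s *\<^sub>v unit_vec n (n - 1) = lam \<cdot>\<^sub>v unit_vec n (n - 1)"
    and b: "b = span_dim n (transvection_roots n c K)"
    and roots: "\<forall>i < b. unit_vec n i \<in> transvection_roots n c K"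
    and form: "is_form n \<mu>"
    and J: "J \<subseteq> {..<n}" "J \<inter> {..<b} \<noteq> {}" "n - 1 \<notin> J"
  shows "(invariant_form n K \<mu> \<longrightarrow> lin_poly n c dvd \<mu> J)
       \<and> (invariant_form n G \<mu> \<longrightarrow> lin_poly n c ^ e dvd \<mu> J)"
proof -
  have c_unit: "c = unit_vec n (n - 1)"
    using c basisH ln by (intro eq_vecI) auto
  have G_carrier: "g \<in> carrier_mat n n" if "g \<in> G" for g
    using grp that unfolding mat_group_def by auto
  have G_hyp: "fixes_coord_hyperplane n g" if "g \<in> G" for g
    using fixH that n unfolding fixes_coord_hyperplane_def c_unit by auto
  note G_inv = minv_left_inverse[OF grp]
  obtain i where i: "i \<in> J" "i < b" using J(2) by auto
  have part1: "Var (n - 1) dvd \<mu> J" if "invariant_form n K \<mu>"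
  proof -
    obtain t where t: "t \<in> K" "is_root_vector n c t (unit_vec n i)"
      using roots i unfolding transvection_roots_def by blast
    then have "t \<in> G" by (simp add: K_def)
    moreover have "t *\<^sub>v unit_vec n (n - 1) = unit_vec n (n - 1) + unit_vec n i"
      using t(2) n unfolding is_root_vector_def c_unit by simp
    ultimately show ?thesis
      using transvection_invariant_coeff_dvd[OF G_inv G_carrier G_hyp] J i(1) t(1) that
      unfolding invariant_form_def by blast
  qed
  have part2: "Var (n - 1) ^ e dvd \<mu> J" if "invariant_form n G \<mu>"
  proof -
    have "Var (n - 1) dvd \<mu> J"
      using part1 that unfolding invariant_form_def K_def by auto
    then show ?thesis
      using dilation_invariant_coeff_dvd[OF G_inv[OF sG] G_carrier[OF sG] G_hyp[OF sG]] eig s_ord n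
        J(1,3) that sG unfolding invariant_form_def by blast
  qed
  have "lin_poly n c = Var (n - 1)"
    using lin_poly_unit_vec[of "n - 1" n] n by (simp add: c_unit)
  then show ?thesis using part1 part2 by simp
qed

end
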